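(* Assume the setting in the context (Condition ASM). Fix $c>1$, $\bar c=(c+1)/(c-1)$, let $\widehat\beta$ be a LASSO solution, $\widehat T=\mathrm{support}(\widehat\beta)$ and $\widehat m=|\widehat T\setminus T|$. If $\lambda\geqslant c\,n\|S\|_\infty$, then $$\sqrt{\widehat m}\leqslant\sqrt s\,\sqrt{\phi(\widehat m)}\,\frac{2\bar c}{\kappa_{\bar c}}+3(\bar c+1)\sqrt{\phi(\widehat m)}\,\frac{n c_s}{\lambda},$$ where $c_s=0$ in the parametric case $f_i=x_i'\beta_0$.
   Context: Condition ASM: observations $(y_i,z_i)$, $i=1,\dots,n$, $z_i$ fixed, $y_i=f(z_i)+\varepsilon_i$, $\varepsilon_i$ i.i.d. $N(0,\sigma^2)$; $f_i=f(z_i)$, $\mathbb{E}_n[a_i]=n^{-1}\sum_ia_i$; $x_i=P(z_i)\in\mathbb{R}^p$ (including a constant) with $\mathbb{E}_n[x_{ij}^2]=1$. $\beta_0$ is any solution of $\min_\beta\mathbb{E}_n[(f_i-x_i'\beta)^2]+\sigma^2\|\beta\|_0/n$; $s=\|\beta_0\|_0$, $T=\mathrm{support}(\beta_0)$, $c_s=\sqrt{\mathbb{E}_n[(f_i-x_i'\beta_0)^2]}\leqslant K\sigma\sqrt{s/n}$ for an absolute constant $K$. $\|\delta\|_{2,n}=\sqrt{\mathbb{E}_n[(x_i'\delta)^2]}$; $S=2\mathbb{E}_n[x_i\varepsilon_i]$; LASSO: $\widehat\beta\in\arg\min_\beta\mathbb{E}_n[(y_i-x_i'\beta)^2]+\frac\lambda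 n\|\beta\|_1$. $\delta_A$ is $\delta$ with entries outside $A$ set to zero. $\kappa_C=\min\{\sqrt s\|\delta\|_{2,n}/\|\delta_T\|_1:\|\delta_{T^c}\|_1\leqslant C\|\delta_T\|_1,\delta_T\neq0\}$. Maximal sparse eigenvalue: $\phi(m)=\max\{\|\delta\|_{2,n}^2/\|\delta\|^2:\delta\neq0,\|\delta_{T^c}\|_0\leqslant m\}$. *)

theory Defs
  imports "HOL-Analysis.Analysis"
begin

text \<open>Observations are indexed by i < n; regressors are indexed by a finite type 'p.
  x i j is the j-th component of x_i = P(z_i).\<close>

definition En :: "nat \<Rightarrow> (nat \<Rightarrow> real) \<Rightarrow> real" where
  "En n a = (\<Sum>i<n. a i) / real n"

definition xdot :: "(nat \<Rightarrow> 'p::finite \<Rightarrow> real) \<Rightarrow> nat \<Rightarrow> ('p \<Rightarrow> real) \<Rightarrow> real" where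
  "xdot x i b = (\<Sum>j\<in>UNIV. x i j * b j)"

definition norm2n :: "nat \<Rightarrow> (nat \<Rightarrow> 'p::finite \<Rightarrow> real) \<Rightarrow> ('p \<Rightarrow> real) \<Rightarrow> real" where
  "norm2n n x d = sqrt (En n (\<lambda>i. (xdot x i d)\<^sup>2))"

definition supp :: "('p \<Rightarrow> real) \<Rightarrow> 'p set" where
  "supp b = {j. b j \<noteq> 0}"

definition l1on :: "'p set \<Rightarrow> ('p \<Rightarrow> real) \<Rightarrow> real" where
  "l1on A b = (\<Sum>j\<in>A. \<bar>b j\<bar>)"

definition l1 :: "('p::finite \<Rightarrow> real) \<Rightarrow> real" where
  "l1 b = (\<Sum>j\<in>UNIV. \<bar>b j\<bar>)"

definition l2 :: "('p::finite \<Rightarrow> real) \<Rightarrow> real" where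
  "l2 b = sqrt (\<Sum>j\<in>UNIV. (b j)\<^sup>2)"

definition restr :: "'p set \<Rightarrow> ('p \<Rightarrow> real) \<Rightarrow> ('p \<Rightarrow> real)" where
  "restr A d = (\<lambda>j. if j \<in> A then d j else 0)"

text \<open>Restricted eigenvalue kappa_C (minimum written as an infimum).\<close>
definition kappa :: "nat \<Rightarrow> (nat \<Rightarrow> 'p::finite \<Rightarrow> real) \<Rightarrow> 'p set \<Rightarrow> real \<Rightarrow> real" where
  "kappa n x T C = Inf {sqrt (real (card T)) * norm2n n x d / l1on T d | d.
      l1on (- T) d \<le> C * l1on T d \<and> restr T d \<noteq> (\<lambda>_. 0)}"

text \<open>Maximal sparse eigenvalue phi(m) (maximum written as a supremum).\<close>
definition phi :: "nat \<Rightarrow> (nat \<Rightarrow> 'p::finite \<Rightarrow> real) \<Rightarrow> 'p set \<Rightarrow> nat \<Rightarrow> real" where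
  "phi n x T m = Sup {(norm2n n x d)\<^sup>2 / (l2 d)\<^sup>2 | d.
      d \<noteq> (\<lambda>_. 0) \<and> card (supp d - T) \<le> m}"

definition lasso_obj :: "nat \<Rightarrow> (nat \<Rightarrow> 'p::finite \<Rightarrow> real) \<Rightarrow> (nat \<Rightarrow> real) \<Rightarrow> real \<Rightarrow> ('p \<Rightarrow> real) \<Rightarrow> real" where
  "lasso_obj n x y lam b = En n (\<lambda>i. (y i - xdot x i b)\<^sup>2) + lam / real n * l1 b"

definition is_lasso :: "nat \<Rightarrow> (nat \<Rightarrow> 'p::finite \<Rightarrow> real) \<Rightarrow> (nat \<Rightarrow> real) \<Rightarrow> real \<Rightarrow> ('p \<Rightarrow> real) \<Rightarrow> bool" where
  "is_lasso n x y lam bh \<longleftrightarrow> (\<forall>b. lasso_obj n x y lam bh \<le> lasso_obj n x y lam b)"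

definition l0_obj :: "nat \<Rightarrow> (nat \<Rightarrow> 'p::finite \<Rightarrow> real) \<Rightarrow> (nat \<Rightarrow> real) \<Rightarrow> real \<Rightarrow> ('p \<Rightarrow> real) \<Rightarrow> real" where
  "l0_obj n x f sig b = En n (\<lambda>i. (f i - xdot x i b)\<^sup>2) + sig\<^sup>2 * real (card (supp b)) / real n"

definition is_l0_target :: "nat \<Rightarrow> (nat \<Rightarrow> 'p::finite \<Rightarrow> real) \<Rightarrow> (nat \<Rightarrow> real) \<Rightarrow> real \<Rightarrow> ('p \<Rightarrow> real) \<Rightarrow> bool" where
  "is_l0_target n x f sig b0 \<longleftrightarrow> (\<forall>b. l0_obj n x f sig b0 \<le> l0_obj n x f sig b)"

definition score :: "nat \<Rightarrow> (nat \<Rightarrow> 'p::finite \<Rightarrow> real) \<Rightarrow> (nat \<Rightarrow> real) \<Rightarrow> 'p \<Rightarrow> real" where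
  "score n x eps j = 2 * En n (\<lambda>i. x i j * eps i)"

definition supnorm :: "('p::finite \<Rightarrow> real) \<Rightarrow> real" where
  "supnorm v = Max (range (\<lambda>j. \<bar>v j\<bar>))"

end

theory Submission
  imports Defs "HOL-Library.Function_Algebras"
begin

text \<open>
  On the support of the LASSO solution betah the KKT conditions give
  |2 E_n[x_ij (y_i - x_i'betah)]| = \<lambda>/n. Since \<lambda> \<ge> c n |S|_\<infinity>, the part of this gradient
  due to the fit error f_i - x_i'betah has size at least (1 - 1/c) \<lambda>/n on each of the m
  coordinates of supp betah outside T. Collecting these coordinates into one vector \<alpha>, its
  squared length is 2 E_n[(f_i - x_i'betah) x_i'\<alpha>] \<le> 2 (c_s + |\<delta>|_{2,n}) sqrt \<phi>(m) |\<alpha>|,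
  so sqrt m (1 - 1/c) \<lambda>/n \<le> 2 (c_s + |\<delta>|_{2,n}) sqrt \<phi>(m), where \<delta> = betah - beta0.
  The prediction error |\<delta>|_{2,n} \<le> 2 c_s + (1 + 1/c) (\<lambda>/n) sqrt s / \<kappa> comes from the basic
  inequality of the LASSO, which also puts \<delta> into the cone where the restricted eigenvalue applies.
\<close>

lemma En_add: "En n (\<lambda>i. a i + b i) = En n a + En n b"
  by (simp add: En_def sum.distrib add_divide_distrib)

lemma En_diff: "En n (\<lambda>i. a i - b i) = En n a - En n b"
  by (simp add: En_def sum_subtractf diff_divide_distrib)

lemma En_cmult: "En n (\<lambda>i. k * a i) = k * En n a"
  by (simp add: En_def sum_distrib_left)

lemma En_cong: "(\<And>i. i < n \<Longrightarrow> a i = b i) \<Longrightarrow> En n a = En n b"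
  by (simp add: En_def)

lemma En_power2_nonneg: "0 \<le> En n (\<lambda>i. (a i)\<^sup>2)"
  by (simp add: En_def sum_nonneg)

lemma En_sum: "finite A \<Longrightarrow> En n (\<lambda>i. \<Sum>j\<in>A. g j i) = (\<Sum>j\<in>A. En n (g j))"
  by (simp add: En_def sum.swap[of _ A] sum_divide_distrib)

lemma sqrt_En_power2_eq_L2_set: "sqrt (En n (\<lambda>i. (a i)\<^sup>2)) = L2_set a {..<n} / sqrt (real n)"
  by (simp add: En_def L2_set_def real_sqrt_divide)

lemma En_Cauchy_Schwarz:
  "En n (\<lambda>i. a i * b i) \<le> sqrt (En n (\<lambda>i. (a i)\<^sup>2)) * sqrt (En n (\<lambda>i. (b i)\<^sup>2))"
proof -
  have "(\<Sum>i<n. a i * b i) \<le> (\<Sum>i<n. \<bar>a i\<bar> * \<bar>b i\<bar>)"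
    by (intro sum_mono) (simp add: abs_mult[symmetric])
  also have "\<dots> \<le> L2_set a {..<n} * L2_set b {..<n}"
    by (rule L2_set_mult_ineq)
  finally have "(\<Sum>i<n. a i * b i) / real n \<le> L2_set a {..<n} * L2_set b {..<n} / real n"
    by (rule divide_right_mono) simp
  then show ?thesis
    unfolding sqrt_En_power2_eq_L2_set by (simp add: En_def)
qed

lemma En_Minkowski:
  "sqrt (En n (\<lambda>i. (a i + b i)\<^sup>2)) \<le> sqrt (En n (\<lambda>i. (a i)\<^sup>2)) + sqrt (En n (\<lambda>i. (b i)\<^sup>2))"
  unfolding sqrt_En_power2_eq_L2_set
  using L2_set_triangle_ineq[of a b "{..<n}"]
  by (simp add: add_divide_distrib[symmetric] divide_right_mono)

lemma norm2n_nonneg: "0 \<le> norm2n n x d"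
  by (simp add: norm2n_def En_power2_nonneg)

lemma norm2n_power2: "(norm2n n x d)\<^sup>2 = En n (\<lambda>i. (xdot x i d)\<^sup>2)"
  by (simp add: norm2n_def En_power2_nonneg)

lemma xdot_add: "xdot x i (a + b) = xdot x i a + xdot x i b"
  by (simp add: xdot_def distrib_left sum.distrib)

lemma xdot_unit: "xdot x i (\<lambda>k. if k = j then t else 0) = t * x i j"
  by (simp add: xdot_def if_distrib cong: if_cong)

lemma score_inner: "(\<Sum>j\<in>UNIV. d j * score n x u j) = 2 * En n (\<lambda>i. u i * xdot x i d)"
proof -
  have "En n (\<lambda>i. u i * xdot x i d) = En n (\<lambda>i. \<Sum>j\<in>UNIV. d j * (x i j * u i))"
    by (simp add: xdot_def sum_distrib_left mult_ac)
  also have "\<dots> = (\<Sum>j\<in>UNIV. d j * En n (\<lambda>i. x i j * u i))"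
    by (simp add: En_sum En_cmult)
  finally show ?thesis
    by (simp add: score_def sum_distrib_left mult_ac)
qed

lemma l1_eq_l1on_add_l1on_Compl: "l1 b = l1on T b + l1on (- T) b"
proof -
  have "l1 b = (\<Sum>j\<in>T \<union> - T. \<bar>b j\<bar>)"
    by (simp add: l1_def)
  also have "\<dots> = l1on T b + l1on (- T) b"
    by (subst sum.union_disjoint) (auto simp: l1on_def)
  finally show ?thesis .
qed

lemma l1_add_unit: "l1 (\<lambda>k. b k + (if k = j then t else 0)) = l1 b - \<bar>b j\<bar> + \<bar>b j + t\<bar>"
  using l1_eq_l1on_add_l1on_Compl[of "\<lambda>k. b k + (if k = j then t else 0)" "{j}"]
    l1_eq_l1on_add_l1on_Compl[of b "{j}"]
  by (simp add: l1on_def)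

lemma l1on_nonneg: "0 \<le> l1on A b"
  by (simp add: l1on_def sum_nonneg)

lemma sum_mult_le_l1_supnorm: "(\<Sum>j\<in>UNIV. d j * v j) \<le> l1 d * supnorm v"
proof -
  have "\<bar>v j\<bar> \<le> supnorm v" for j
    unfolding supnorm_def by (rule Max_ge) auto
  then have "(\<Sum>j\<in>UNIV. d j * v j) \<le> (\<Sum>j\<in>UNIV. \<bar>d j\<bar> * supnorm v)"
    by (intro sum_mono) (metis abs_ge_self abs_mult abs_ge_zero mult_left_mono order_trans)
  then show ?thesis
    by (simp add: l1_def sum_distrib_right)
qed

lemma l1_diff_le_l1on_supp:
  "l1 b0 - l1 b \<le> l1on (supp b0) (b - b0) - l1on (- supp b0) (b - b0)"
proof -
  have "l1on (supp b0) b0 \<le> l1on (supp b0) b + l1on (supp b0) (b - b0)"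
    unfolding l1on_def sum.distrib[symmetric] by (intro sum_mono) simp
  moreover have "l1on (- supp b0) b0 = 0" "l1on (- supp b0) (b - b0) = l1on (- supp b0) b"
    by (simp_all add: l1on_def supp_def)
  ultimately show ?thesis
    using l1_eq_l1on_add_l1on_Compl[of b0 "supp b0"] l1_eq_l1on_add_l1on_Compl[of b "supp b0"]
    by linarith
qed

lemma l2_nonneg: "0 \<le> l2 b"
  by (simp add: l2_def sum_nonneg)

lemma l2_restr_ge:
  assumes "\<And>j. j \<in> J \<Longrightarrow> M \<le> \<bar>v j\<bar>" and "0 \<le> M"
  shows "sqrt (real (card J)) * M \<le> l2 (restr J v)"
proof -
  have "real (card J) * M\<^sup>2 = (\<Sum>j\<in>J. M\<^sup>2)"
    by simp
  also have "\<dots> \<le> (\<Sum>j\<in>J. (v j)\<^sup>2)"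
    using assms by (intro sum_mono) (metis abs_le_square_iff abs_of_nonneg order_trans abs_ge_zero)
  also have "\<dots> = (\<Sum>j\<in>UNIV. if j \<in> J then (v j)\<^sup>2 else 0)"
    by (simp add: sum.If_cases)
  also have "\<dots> = (\<Sum>j\<in>UNIV. (restr J v j)\<^sup>2)"
    by (rule sum.cong) (simp_all add: restr_def)
  finally have "sqrt (real (card J) * M\<^sup>2) \<le> l2 (restr J v)"
    unfolding l2_def by (rule real_sqrt_le_mono)
  then show ?thesis
    using assms(2) by (simp add: real_sqrt_mult)
qed

lemma kappa_le:
  assumes "l1on (- T) d \<le> C * l1on T d" and "restr T d \<noteq> (\<lambda>_. 0)"
  shows "kappa n x T C \<le> sqrt (real (card T)) * norm2n n x d / l1on T d"
  unfolding kappa_def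
proof (rule cInf_lower)
  show "bdd_below {sqrt (real (card T)) * norm2n n x d / l1on T d | d.
      l1on (- T) d \<le> C * l1on T d \<and> restr T d \<noteq> (\<lambda>_. 0)}"
    by (rule bdd_belowI[of _ 0]) (auto simp: norm2n_nonneg l1on_nonneg)
qed (use assms in blast)

lemma linear_coeff_zero_if_local_min:
  fixes a b :: real
  assumes "b > 0" and "\<And>t. \<bar>t\<bar> < b \<Longrightarrow> 0 \<le> t * a + t\<^sup>2"
  shows "a = 0"
proof (rule ccontr)
  assume "a \<noteq> 0"
  define e where "e = min \<bar>a\<bar> b / 2"
  have e: "0 < e" "e < b" "e < \<bar>a\<bar>"
    using \<open>a \<noteq> 0\<close> \<open>b > 0\<close> by (auto simp: e_def)
  have "0 \<le> (- sgn a * e) * a + (- sgn a * e)\<^sup>2"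
    using e by (intro assms(2)) (simp add: abs_mult abs_sgn_eq_1[OF \<open>a \<noteq> 0\<close>])
  also have "\<dots> = e * (e - \<bar>a\<bar>)"
    using \<open>a \<noteq> 0\<close> by (simp add: sgn_mult_abs power2_eq_square algebra_simps sgn_if)
  also have "\<dots> < 0"
    using e by (simp add: mult_pos_neg)
  finally show False by simp
qed

lemma lasso_obj_add_unit:
  "lasso_obj n x y lam (\<lambda>k. b k + (if k = j then t else 0))
     = lasso_obj n x y lam b - t * score n x (\<lambda>i. y i - xdot x i b) j
       + t\<^sup>2 * En n (\<lambda>i. (x i j)\<^sup>2) + lam / real n * (\<bar>b j + t\<bar> - \<bar>b j\<bar>)"
proof -
  have "xdot x i (\<lambda>k. b k + (if k = j then t else 0)) = xdot x i b + t * x i j" for i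
    using xdot_add[of x i b "\<lambda>k. if k = j then t else 0"] by (simp add: xdot_unit plus_fun_def)
  then have "En n (\<lambda>i. (y i - xdot x i (\<lambda>k. b k + (if k = j then t else 0)))\<^sup>2)
      = En n (\<lambda>i. (y i - xdot x i b)\<^sup>2 - t * (2 * (x i j * (y i - xdot x i b))) + t\<^sup>2 * (x i j)\<^sup>2)"
    by (simp add: power2_eq_square algebra_simps)
  also have "\<dots> = En n (\<lambda>i. (y i - xdot x i b)\<^sup>2) - t * score n x (\<lambda>i. y i - xdot x i b) j
      + t\<^sup>2 * En n (\<lambda>i. (x i j)\<^sup>2)"
    unfolding En_add En_diff En_cmult score_def ..
  finally show ?thesis
    by (simp add: lasso_obj_def l1_add_unit algebra_simps)
qed

locale normalized_design =
  fixes n :: nat and x :: "nat \<Rightarrow> 'p::finite \<Rightarrow> real"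
  assumes normalized: "\<And>j. En n (\<lambda>i. (x i j)\<^sup>2) = 1"
begin

lemma lasso_kkt:
  assumes "is_lasso n x y lam b" and "j \<in> supp b"
  shows "\<bar>score n x (\<lambda>i. y i - xdot x i b) j\<bar> = \<bar>lam\<bar> / real n"
proof -
  define G where "G = score n x (\<lambda>i. y i - xdot x i b) j"
  have bj: "b j \<noteq> 0"
    using assms(2) by (simp add: supp_def)
  \<comment> \<open>near b j the penalty is linear in t, so optimality forces a first-order condition\<close>
  have "0 \<le> t * (sgn (b j) * (lam / real n) - G) + t\<^sup>2" if "\<bar>t\<bar> < \<bar>b j\<bar>" for t
  proof -
    have "\<bar>b j + t\<bar> - \<bar>b j\<bar> = sgn (b j) * t"
      using that by (cases "b j > 0") (auto simp: sgn_if)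
    moreover have "lasso_obj n x y lam b \<le> lasso_obj n x y lam (\<lambda>k. b k + (if k = j then t else 0))"
      using assms(1) by (simp add: is_lasso_def)
    ultimately show ?thesis
      by (simp add: lasso_obj_add_unit normalized G_def algebra_simps)
  qed
  then have "G = sgn (b j) * (lam / real n)"
    using bj linear_coeff_zero_if_local_min[of "\<bar>b j\<bar>"] by fastforce
  then have "\<bar>G\<bar> = \<bar>lam / real n\<bar>"
    using bj by (simp only: abs_mult abs_sgn_eq_1) simp
  then show ?thesis
    by (simp add: G_def)
qed

lemma norm2n_power2_le_card_l2: "(norm2n n x d)\<^sup>2 \<le> real CARD('p) * (l2 d)\<^sup>2"
proof -
  have "(xdot x i d)\<^sup>2 \<le> (\<Sum>j\<in>UNIV. (d j)\<^sup>2) * (\<Sum>j\<in>UNIV. (x i j)\<^sup>2)" for i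
  proof -
    have "\<bar>xdot x i d\<bar> \<le> (\<Sum>j\<in>UNIV. \<bar>x i j\<bar> * \<bar>d j\<bar>)"
      unfolding xdot_def abs_mult[symmetric] by (rule sum_abs)
    also have "\<dots> \<le> L2_set (x i) UNIV * L2_set d UNIV"
      by (rule L2_set_mult_ineq)
    finally have "\<bar>xdot x i d\<bar>\<^sup>2 \<le> (L2_set (x i) UNIV * L2_set d UNIV)\<^sup>2"
      by (rule power_mono) simp
    then show ?thesis
      by (simp add: power_mult_distrib L2_set_def sum_nonneg mult.commute)
  qed
  then have "En n (\<lambda>i. (xdot x i d)\<^sup>2) \<le> En n (\<lambda>i. (\<Sum>j\<in>UNIV. (d j)\<^sup>2) * (\<Sum>j\<in>UNIV. (x i j)\<^sup>2))"
    unfolding En_def by (intro divide_right_mono sum_mono) simp_all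
  also have "\<dots> = real CARD('p) * (l2 d)\<^sup>2"
    by (simp add: En_cmult En_sum normalized l2_def sum_nonneg)
  finally show ?thesis
    by (simp add: norm2n_power2)
qed

lemma phi_ge:
  assumes "d \<noteq> (\<lambda>_. 0)" and "card (supp d - T) \<le> m"
  shows "(norm2n n x d)\<^sup>2 / (l2 d)\<^sup>2 \<le> phi n x T m"
  unfolding phi_def
proof (rule cSup_upper)
  show "bdd_above {(norm2n n x d)\<^sup>2 / (l2 d)\<^sup>2 | d. d \<noteq> (\<lambda>_. 0) \<and> card (supp d - T) \<le> m}"
    by (rule bdd_aboveI[of _ "real CARD('p)"])
      (auto simp: divide_le_eq norm2n_power2_le_card_l2 mult.commute)
qed (use assms in blast)

lemma phi_nonneg:
  assumes "T \<noteq> {} \<or> m > 0"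
  shows "0 \<le> phi n x T m"
proof -
  obtain j where "j \<in> T \<or> m > 0"
    using assms by blast
  define d where "d = (\<lambda>k. if k = j then 1 else 0 :: real)"
  have "supp d - T \<subseteq> {j} - T"
    by (auto simp: d_def supp_def)
  then have "card (supp d - T) \<le> card ({j} - T)"
    by (rule card_mono[rotated]) simp
  also have "\<dots> \<le> m"
    using \<open>j \<in> T \<or> m > 0\<close> by (cases "j \<in> T") (auto simp: insert_Diff_if)
  finally have "card (supp d - T) \<le> m" .
  moreover have "d \<noteq> (\<lambda>_. 0)"
    by (auto simp: d_def fun_eq_iff)
  ultimately show ?thesis
    by (meson phi_ge divide_nonneg_nonneg zero_le_power2 order_trans)
qed

lemma l2_restr_score_le:
  assumes nonzero: "restr J (score n x u) \<noteq> (\<lambda>_. 0)" and card: "card (J - T) \<le> m"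
  shows "l2 (restr J (score n x u)) \<le> 2 * sqrt (En n (\<lambda>i. (u i)\<^sup>2)) * sqrt (phi n x T m)"
proof -
  define \<alpha> where "\<alpha> = restr J (score n x u)"
  have "l2 \<alpha> \<noteq> 0"
    using nonzero by (auto simp: \<alpha>_def l2_def fun_eq_iff sum_nonneg_eq_0_iff)
  then have Q: "0 < l2 \<alpha>"
    using l2_nonneg[of \<alpha>] by linarith
  have "card (supp \<alpha> - T) \<le> card (J - T)"
    by (rule card_mono) (auto simp: \<alpha>_def supp_def restr_def)
  then have "(norm2n n x \<alpha>)\<^sup>2 / (l2 \<alpha>)\<^sup>2 \<le> phi n x T m"
    using card nonzero by (intro phi_ge) (simp_all add: \<alpha>_def)
  then have "sqrt ((norm2n n x \<alpha>)\<^sup>2) \<le> sqrt (phi n x T m * (l2 \<alpha>)\<^sup>2)"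
    using Q by (intro real_sqrt_le_mono) (simp add: pos_divide_le_eq)
  then have \<alpha>_norm: "norm2n n x \<alpha> \<le> sqrt (phi n x T m) * l2 \<alpha>"
    using Q by (simp add: real_sqrt_mult norm2n_nonneg)
  have "(l2 \<alpha>)\<^sup>2 = (\<Sum>j\<in>UNIV. \<alpha> j * score n x u j)"
    unfolding l2_def by (simp add: sum_nonneg) (auto simp: \<alpha>_def restr_def power2_eq_square intro: sum.cong)
  also have "\<dots> = 2 * En n (\<lambda>i. u i * xdot x i \<alpha>)"
    by (rule score_inner)
  also have "\<dots> \<le> 2 * (sqrt (En n (\<lambda>i. (u i)\<^sup>2)) * norm2n n x \<alpha>)"
    using En_Cauchy_Schwarz[of n u "\<lambda>i. xdot x i \<alpha>"] by (simp add: norm2n_def)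
  also have "\<dots> \<le> 2 * (sqrt (En n (\<lambda>i. (u i)\<^sup>2)) * (sqrt (phi n x T m) * l2 \<alpha>))"
    using \<alpha>_norm by (simp add: mult_left_mono En_power2_nonneg)
  finally show ?thesis
    using Q by (simp add: \<alpha>_def[symmetric] power2_eq_square mult_ac)
qed

end

locale lasso_problem = normalized_design n x
  for n :: nat and x :: "nat \<Rightarrow> 'p::finite \<Rightarrow> real" +
  fixes f eps y :: "nat \<Rightarrow> real" and c lam :: real and beta0 betah :: "'p \<Rightarrow> real"
  assumes n_pos: "n > 0"
    and model: "\<And>i. i < n \<Longrightarrow> y i = f i + eps i"
    and c_gt: "c > 1"
    and lam_pos: "lam > 0"
    and lasso: "is_lasso n x y lam betah"
    and lam_ge: "lam \<ge> c * real n * supnorm (score n x eps)"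
begin

abbreviation T :: "'p set" where "T \<equiv> supp beta0"
abbreviation delta :: "'p \<Rightarrow> real" where "delta \<equiv> betah - beta0"
abbreviation c_s :: real where "c_s \<equiv> sqrt (En n (\<lambda>i. (f i - xdot x i beta0)\<^sup>2))"
abbreviation cbar :: real where "cbar \<equiv> (c + 1) / (c - 1)"

lemma supnorm_score_le: "supnorm (score n x eps) \<le> lam / real n / c"
  using lam_ge c_gt n_pos by (simp add: pos_le_divide_eq mult_ac)

lemma xdot_betah: "xdot x i betah = xdot x i beta0 + xdot x i delta"
  using xdot_add[of x i beta0 delta] by simp

lemma basic_inequality:
  "(norm2n n x delta)\<^sup>2 \<le> 2 * c_s * norm2n n x delta
     + lam / real n * ((1 + 1 / c) * l1on T delta - (1 - 1 / c) * l1on (- T) delta)"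
proof -
  define r where "r i = f i - xdot x i beta0" for i
  define d where "d i = xdot x i delta" for i
  have "En n (\<lambda>i. (y i - xdot x i betah)\<^sup>2)
      = En n (\<lambda>i. (y i - xdot x i beta0)\<^sup>2 - 2 * (eps i * d i) - 2 * (r i * d i) + (d i)\<^sup>2)"
    by (rule En_cong) (simp add: model xdot_betah r_def d_def power2_eq_square algebra_simps)
  also have "\<dots> = En n (\<lambda>i. (y i - xdot x i beta0)\<^sup>2) - 2 * En n (\<lambda>i. eps i * d i)
      - 2 * En n (\<lambda>i. r i * d i) + (norm2n n x delta)\<^sup>2"
    unfolding En_add En_diff En_cmult norm2n_power2 d_def ..
  finally have "(norm2n n x delta)\<^sup>2 \<le> 2 * En n (\<lambda>i. eps i * d i) + 2 * En n (\<lambda>i. r i * d i)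
      + lam / real n * (l1 beta0 - l1 betah)"
    using lasso[unfolded is_lasso_def, rule_format, of beta0]
    by (simp add: lasso_obj_def algebra_simps)
  moreover have "2 * En n (\<lambda>i. eps i * d i) \<le> lam / real n / c * l1 delta"
  proof -
    have "2 * En n (\<lambda>i. eps i * d i) \<le> l1 delta * supnorm (score n x eps)"
      using sum_mult_le_l1_supnorm[of delta "score n x eps"] unfolding score_inner d_def .
    also have "\<dots> \<le> l1 delta * (lam / real n / c)"
      by (intro mult_left_mono supnorm_score_le) (simp add: l1_def sum_nonneg)
    finally show ?thesis by (simp add: mult.commute)
  qed
  moreover have "En n (\<lambda>i. r i * d i) \<le> c_s * norm2n n x delta"
    using En_Cauchy_Schwarz[of n r d] by (simp add: r_def d_def norm2n_def)
  moreover have "lam / real n * (l1 beta0 - l1 betah) \<le> lam / real n * (l1on T delta - l1on (- T) delta)"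
    using lam_pos l1_diff_le_l1on_supp[of beta0 betah] by (intro mult_left_mono) simp_all
  moreover have "lam / real n / c * l1 delta + lam / real n * (l1on T delta - l1on (- T) delta)
      = lam / real n * ((1 + 1 / c) * l1on T delta - (1 - 1 / c) * l1on (- T) delta)"
    by (simp add: l1_eq_l1on_add_l1on_Compl[of _ T] algebra_simps)
  ultimately show ?thesis
    by linarith
qed

lemma restricted_cone:
  assumes "2 * c_s * norm2n n x delta < (norm2n n x delta)\<^sup>2"
  shows "l1on (- T) delta \<le> cbar * l1on T delta" and "0 < l1on T delta"
proof -
  have "0 < lam / real n * ((1 + 1 / c) * l1on T delta - (1 - 1 / c) * l1on (- T) delta)"
    using assms basic_inequality by linarith
  moreover have "0 < lam / real n"
    using lam_pos n_pos by simp
  ultimately have "0 < (1 + 1 / c) * l1on T delta - (1 - 1 / c) * l1on (- T) delta"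
    by (rule zero_less_mult_pos)
  then have "(1 - 1 / c) * l1on (- T) delta < (1 + 1 / c) * l1on T delta"
    by linarith
  then have "c * ((1 - 1 / c) * l1on (- T) delta) < c * ((1 + 1 / c) * l1on T delta)"
    using c_gt by (intro mult_strict_left_mono) simp_all
  moreover have "c * (1 - 1 / c) = c - 1" and "c * (1 + 1 / c) = c + 1"
    using c_gt by (simp_all add: algebra_simps)
  ultimately have cone: "(c - 1) * l1on (- T) delta < (c + 1) * l1on T delta"
    by (simp only: mult.assoc[symmetric])
  have "cbar * l1on T delta = (c + 1) * l1on T delta / (c - 1)"
    by simp
  then show "l1on (- T) delta \<le> cbar * l1on T delta"
    using cone c_gt by (simp add: pos_le_divide_eq mult.commute)
  have "0 \<le> (c - 1) * l1on (- T) delta"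
    using c_gt by (simp add: l1on_nonneg)
  then have "0 < (c + 1) * l1on T delta"
    using cone by linarith
  then show "0 < l1on T delta"
    using c_gt by (simp add: zero_less_mult_iff)
qed

lemma prediction_bound:
  assumes kappa_pos: "T \<noteq> {} \<longrightarrow> kappa n x T cbar > 0"
  shows "norm2n n x delta
      \<le> 2 * c_s + (1 + 1 / c) * (lam / real n) * (sqrt (real (card T)) / kappa n x T cbar)"
    (is "?\<nu> \<le> 2 * c_s + ?K * ?R")
proof -
  have K_nonneg: "0 \<le> ?K"
    using c_gt lam_pos by simp
  show ?thesis
  proof (cases "?\<nu> \<le> 2 * c_s")
    case True
    have "0 \<le> ?R"
      using kappa_pos by (cases "T = {}") simp_all
    with K_nonneg have "0 \<le> ?K * ?R"
      by (rule mult_nonneg_nonneg)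
    then show ?thesis
      using True by linarith
  next
    case False
    moreover have "0 \<le> c_s"
      by (simp add: En_power2_nonneg)
    ultimately have \<nu>_pos: "0 < ?\<nu>"
      by linarith
    then have excess: "2 * c_s * ?\<nu> < ?\<nu>\<^sup>2"
      using False by (simp add: power2_eq_square)
    have A_pos: "0 < l1on T delta"
      using restricted_cone(2)[OF excess] .
    then have "T \<noteq> {}"
      by (auto simp: l1on_def)
    then have \<kappa>: "0 < kappa n x T cbar"
      using kappa_pos by simp
    have "restr T delta \<noteq> (\<lambda>_. 0)"
    proof
      assume "restr T delta = (\<lambda>_. 0)"
      then have "l1on T delta = 0"
        unfolding l1on_def by (intro sum.neutral) (metis restr_def abs_zero)
      then show False
        using A_pos by simp
  qed
    then have "kappa n x T cbar \<le> sqrt (real (card T)) * ?\<nu> / l1on T delta"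
      using restricted_cone(1)[OF excess] by (rule kappa_le[rotated])
    then have A_le: "l1on T delta \<le> ?\<nu> * ?R"
      using A_pos \<kappa> by (simp add: field_simps)
    have "0 \<le> lam / real n * ((1 - 1 / c) * l1on (- T) delta)"
      using lam_pos c_gt by (simp add: l1on_nonneg)
    then have "?\<nu> * (?\<nu> - 2 * c_s) \<le> lam / real n * ((1 + 1 / c) * l1on T delta)"
      using basic_inequality
        right_diff_distrib[of "lam / real n" "(1 + 1 / c) * l1on T delta" "(1 - 1 / c) * l1on (- T) delta"]
        right_diff_distrib[of ?\<nu> ?\<nu> "2 * c_s"] power2_eq_square[of ?\<nu>] mult.commute[of ?\<nu> "2 * c_s"]
      by linarith
    also have "\<dots> = ?K * l1on T delta"
      by (simp add: mult_ac)
    also have "\<dots> \<le> ?K * (?\<nu> * ?R)"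
      using A_le K_nonneg by (rule mult_left_mono)
    also have "\<dots> = ?\<nu> * (?K * ?R)"
      by (simp add: mult_ac)
    finally have "?\<nu> - 2 * c_s \<le> ?K * ?R"
      unfolding mult_le_cancel_left_pos[OF \<nu>_pos] .
    then show ?thesis
      by linarith
  qed
qed

lemma fit_score_ge:
  assumes "j \<in> supp betah"
  shows "(1 - 1 / c) * (lam / real n) \<le> \<bar>score n x (\<lambda>i. f i - xdot x i betah) j\<bar>"
proof -
  have "En n (\<lambda>i. x i j * (y i - xdot x i betah))
      = En n (\<lambda>i. x i j * eps i + x i j * (f i - xdot x i betah))"
    by (rule En_cong) (simp add: model algebra_simps)
  then have "score n x (\<lambda>i. y i - xdot x i betah) j
      = score n x eps j + score n x (\<lambda>i. f i - xdot x i betah) j"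
    by (simp add: score_def En_add)
  moreover have "\<bar>score n x (\<lambda>i. y i - xdot x i betah) j\<bar> = lam / real n"
    using lasso_kkt[OF lasso assms] lam_pos by simp
  moreover have "\<bar>score n x eps j\<bar> \<le> lam / real n / c"
    using supnorm_score_le unfolding supnorm_def by (meson Max_ge finite_imageI finite rangeI order_trans)
  ultimately show ?thesis
    by (simp add: algebra_simps)
qed

lemma sparsity_bound:
  assumes "supp betah - T \<noteq> {}"
  shows "sqrt (real (card (supp betah - T))) * ((1 - 1 / c) * (lam / real n))
      \<le> 2 * (c_s + norm2n n x delta) * sqrt (phi n x T (card (supp betah - T)))"
proof -
  define J where "J = supp betah - T"
  define v where "v = score n x (\<lambda>i. f i - xdot x i betah)"
  define M where "M = (1 - 1 / c) * (lam / real n)"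
  have M_pos: "0 < M"
    using c_gt lam_pos n_pos by (simp add: M_def)
  have v_ge: "M \<le> \<bar>v j\<bar>" if "j \<in> J" for j
    using that fit_score_ge by (simp add: J_def v_def M_def)
  obtain j where "j \<in> J"
    using assms by (auto simp: J_def)
  then have "restr J v j \<noteq> 0"
    using v_ge[of j] M_pos by (auto simp: restr_def)
  then have "restr J v \<noteq> (\<lambda>_. 0)"
    by auto
  moreover have "card (J - T) \<le> card J"
    by (simp add: J_def)
  ultimately have l2_le: "l2 (restr J v)
      \<le> 2 * sqrt (En n (\<lambda>i. (f i - xdot x i betah)\<^sup>2)) * sqrt (phi n x T (card J))"
    unfolding v_def by (rule l2_restr_score_le)
  have fit_le: "sqrt (En n (\<lambda>i. (f i - xdot x i betah)\<^sup>2)) \<le> c_s + norm2n n x delta"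
    using En_Minkowski[of n "\<lambda>i. f i - xdot x i beta0" "\<lambda>i. - xdot x i delta"]
    by (simp add: xdot_betah norm2n_def algebra_simps)
  have "0 \<le> phi n x T (card J)"
    using \<open>j \<in> J\<close> by (intro phi_nonneg) (auto simp: J_def card_gt_0_iff)
  have "sqrt (real (card J)) * M \<le> l2 (restr J v)"
    using v_ge M_pos by (intro l2_restr_ge) simp_all
  also have "\<dots> \<le> 2 * (c_s + norm2n n x delta) * sqrt (phi n x T (card J))"
    using l2_le fit_le \<open>0 \<le> phi n x T (card J)\<close>
    by (meson mult_le_cancel_left_pos mult_right_mono order_trans real_sqrt_ge_zero zero_less_numeral)
  finally show ?thesis
    by (simp add: J_def M_def)
qed

lemma support_size_bound:
  assumes kappa_pos: "T \<noteq> {} \<longrightarrow> kappa n x T cbar > 0"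
    and approx_exact: "T = {} \<Longrightarrow> c_s = 0"
  defines "m \<equiv> card (supp betah - T)"
  shows "sqrt (real m) \<le> sqrt (real (card T)) * sqrt (phi n x T m) * (2 * cbar / kappa n x T cbar)
      + 3 * (cbar + 1) * sqrt (phi n x T m) * (real n * c_s / lam)"
proof -
  define P where "P = sqrt (phi n x T m)"
  define R where "R = sqrt (real (card T)) / kappa n x T cbar"
  define L where "L = lam / real n"
  have L_pos: "0 < L" and c_s_nonneg: "0 \<le> c_s"
    using lam_pos n_pos by (simp_all add: L_def En_power2_nonneg)
  have R_nonneg: "0 \<le> R"
    using kappa_pos by (cases "T = {}") (simp_all add: R_def)
  have rhs: "sqrt (real (card T)) * P * (2 * cbar / kappa n x T cbar)
      + 3 * (cbar + 1) * P * (real n * c_s / lam) = 2 * cbar * P * R + 3 * (cbar + 1) * P * c_s / L"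
    by (simp add: R_def L_def mult_ac)
  show ?thesis
    unfolding P_def[symmetric] rhs
  proof (cases "m = 0")
    case True
    show "sqrt (real m) \<le> 2 * cbar * P * R + 3 * (cbar + 1) * P * c_s / L"
    proof (cases "T = {}")
      case True
      then show ?thesis
        using \<open>m = 0\<close> approx_exact by (simp add: R_def)
    next
      case False
      then have "0 \<le> P"
        by (simp add: P_def phi_nonneg)
      then show ?thesis
        using \<open>m = 0\<close> c_gt R_nonneg L_pos c_s_nonneg by simp
    qed
  next
    case False
    then have P_nonneg: "0 \<le> P"
      by (simp add: P_def phi_nonneg)
    have "sqrt (real m) * ((1 - 1 / c) * L) \<le> 2 * (c_s + norm2n n x delta) * P"
      using sparsity_bound False by (simp add: m_def P_def L_def)
    also have "\<dots> \<le> 2 * (3 * c_s + (1 + 1 / c) * L * R) * P"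
      using prediction_bound[OF kappa_pos] P_nonneg by (intro mult_right_mono) (simp_all add: L_def R_def)
    also have "\<dots> = ((1 - 1 / c) * L) * (2 * cbar * P * R + 3 * (cbar + 1) * P * c_s / L)"
    proof -
      define b where "b = cbar"
      have "(1 - 1 / c) * b = 1 + 1 / c" and "(1 - 1 / c) * (b + 1) = 2"
        using c_gt by (simp_all add: b_def field_simps)
      moreover have "((1 - 1 / c) * L) * (2 * b * P * R + 3 * (b + 1) * P * c_s / L)
          = 2 * ((1 - 1 / c) * b) * L * P * R + 3 * ((1 - 1 / c) * (b + 1)) * P * c_s"
        using L_pos c_gt by (simp add: field_simps)
      ultimately show ?thesis
        by (simp add: b_def algebra_simps)
    qed
    finally show "sqrt (real m) \<le> 2 * cbar * P * R + 3 * (cbar + 1) * P * c_s / L"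
      using c_gt L_pos by (simp add: mult_le_cancel_left_pos)
  qed
qed

end

theorem lemma5:
  fixes n :: nat and x :: "nat \<Rightarrow> 'p::finite \<Rightarrow> real"
    and f eps y :: "nat \<Rightarrow> real"
    and sig K c lam :: real
    and beta0 betah :: "'p \<Rightarrow> real"
  assumes n_pos: "n > 0"
    and model: "\<And>i. i < n \<Longrightarrow> y i = f i + eps i"
    and const: "\<exists>j. \<forall>i<n. x i j = 1"
    and normalized: "\<And>j. En n (\<lambda>i. (x i j)\<^sup>2) = 1"
    and sigma_pos: "sig > 0"
    and l0_target: "is_l0_target n x f sig beta0"
    and K_nonneg: "K \<ge> 0"
    and cs_bound: "sqrt (En n (\<lambda>i. (f i - xdot x i beta0)\<^sup>2))
                     \<le> K * sig * sqrt (real (card (supp beta0)) / real n)"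
    and c_gt: "c > 1"
    and lam_pos: "lam > 0"
    and lasso: "is_lasso n x y lam betah"
    and lam_ge: "lam \<ge> c * real n * supnorm (score n x eps)"
    and kappa_pos: "supp beta0 \<noteq> {} \<longrightarrow> kappa n x (supp beta0) ((c + 1) / (c - 1)) > 0"
  shows "let s = card (supp beta0); T = supp beta0;
             cbar = (c + 1) / (c - 1);
             cs = sqrt (En n (\<lambda>i. (f i - xdot x i beta0)\<^sup>2));
             mh = card (supp betah - T)
         in sqrt (real mh) \<le>
              sqrt (real s) * sqrt (phi n x T mh) * (2 * cbar / kappa n x T cbar)
              + 3 * (cbar + 1) * sqrt (phi n x T mh) * (real n * cs / lam)"
proof -
  \<comment> \<open>Only c_s = 0 for an empty target support is taken from cs_bound.\<close>
  interpret lasso_problem n x f eps y c lam beta0 betah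
    using n_pos model normalized c_gt lam_pos lasso lam_ge by unfold_locales
  have "c_s = 0" if "T = {}"
    using cs_bound that En_power2_nonneg[of n "\<lambda>i. f i - xdot x i beta0"] by simp
  then show ?thesis
    unfolding Let_def using support_size_bound kappa_pos by blast
qed

end
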